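(* For any term $t$, any context $\Gamma$ and any type $T$ of the Scalar type system: (1) if $\Gamma\vdash(\mathbf 0)\,t:T$ then $T\equiv\overline0$; (2) if $\Gamma\vdash(t)\,\mathbf 0:T$ then $T\equiv\overline0$.
   Context: Fix a commutative ring $(\mathcal{S},+,\times)$. Terms: $t,r ::= b \mid (t)\,r \mid \mathbf{0} \mid \alpha.t \mid t+r$, basis terms $b ::= x \mid \lambda x\,t$, modulo associativity and commutativity of $+$. Types: $T ::= U \mid \forall X.T \mid \alpha.T \mid \overline{0}$; unit types: $U ::= X \mid U\to T \mid \forall X.U$. Type variables are only substituted by unit types; $(\alpha.T)[U/X]=\alpha.T[U/X]$. Type equivalence $\equiv$ is the least congruence with $\alpha.\overline0\equiv\overline0$, $0.T\equiv\overline0$, $1.T\equiv T$, $\alpha.(\beta.T)\equiv(\alpha\times\beta).T$, $\forall X.\alpha.T\equiv\alpha.\forall X.T$. A context is a set of distinct term variables with unit types. Typing rules: (ax) $\Gamma,x:U\vdash x:U$; ($\equiv$) from $\Gamma\vdash t:T$ and $T\equiv S$ infer $\Gamma\vdash t:S$; ($\to_E$) from $\Gamma\vdash t:\alpha.(U\to T)$ and $\Gamma\vdash r:\beta.U$ infer $\Gamma\vdash (t)\,r:(\alpha\times\beta).T$; ($\to_I$) from $\Gamma,x:U\vdash t:T$ infer $\Gamma\vdash\lambda x\,t:U\to T$; ($\forall_E$) from $\Gamma\vdash t:\forall X.T$ infer $\Gamma\vdash t:T[U/X]$, $U$ unit; ($\forall_I$) from $\Gamma\vdash t:T$ with $X$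 not free in $\Gamma$ infer $\Gamma\vdash t:\forall X.T$; ($ax_{\overline0}$) $\Gamma\vdash\mathbf 0:\overline0$; ($+_I$) from $\Gamma\vdash t:\alpha.T$ and $\Gamma\vdash r:\beta.T$ infer $\Gamma\vdash t+r:(\alpha+\beta).T$; ($s_I$) from $\Gamma\vdash t:T$ infer $\Gamma\vdash\alpha.t:\alpha.T$. *)

theory Defs
  imports Main
begin

datatype 's ty =
    TVar nat
  | Arr "'s ty" "'s ty"
  | All "'s ty"               (* \<forall>X. T, X bound as de Bruijn index 0 *)
  | Scal 's "'s ty"
  | TZero

fun unit_ty :: "'s ty \<Rightarrow> bool" and ty_ok :: "'s ty \<Rightarrow> bool" where
  "unit_ty (TVar n) = True"
| "unit_ty (Arr U T) = (unit_ty U \<and> ty_ok T)"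
| "unit_ty (All U) = unit_ty U"
| "unit_ty (Scal a T) = False"
| "unit_ty TZero = False"
| "ty_ok (TVar n) = True"
| "ty_ok (Arr U T) = (unit_ty U \<and> ty_ok T)"
| "ty_ok (All T) = ty_ok T"
| "ty_ok (Scal a T) = ty_ok T"
| "ty_ok TZero = True"

fun lift :: "nat \<Rightarrow> 's ty \<Rightarrow> 's ty" where
  "lift c (TVar i) = TVar (if i < c then i else Suc i)"
| "lift c (Arr U T) = Arr (lift c U) (lift c T)"
| "lift c (All T) = All (lift (Suc c) T)"
| "lift c (Scal a T) = Scal a (lift c T)"
| "lift c TZero = TZero"

fun subst :: "nat \<Rightarrow> 's ty \<Rightarrow> 's ty \<Rightarrow> 's ty" where
  "subst k U (TVar i) = (if i < k then TVar i else if i = k then U else TVar (i - 1))"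
| "subst k U (Arr V T) = Arr (subst k U V) (subst k U T)"
| "subst k U (All T) = All (subst (Suc k) (lift 0 U) T)"
| "subst k U (Scal a T) = Scal a (subst k U T)"
| "subst k U TZero = TZero"

inductive ty_equiv :: "'s::comm_ring_1 ty \<Rightarrow> 's ty \<Rightarrow> bool" (infix "\<equiv>\<^sub>T" 50) where
  ax_scal_zero: "Scal a TZero \<equiv>\<^sub>T TZero"
| ax_zero_scal: "ty_ok T \<Longrightarrow> Scal 0 T \<equiv>\<^sub>T TZero"
| ax_one: "ty_ok T \<Longrightarrow> Scal 1 T \<equiv>\<^sub>T T"
| ax_mult: "ty_ok T \<Longrightarrow> Scal a (Scal b T) \<equiv>\<^sub>T Scal (a * b) T"
| ax_all: "ty_ok T \<Longrightarrow> All (Scal a T) \<equiv>\<^sub>T Scal a (All T)"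
| eq_refl: "ty_ok T \<Longrightarrow> T \<equiv>\<^sub>T T"
| eq_sym: "T \<equiv>\<^sub>T S \<Longrightarrow> S \<equiv>\<^sub>T T"
| eq_trans: "T \<equiv>\<^sub>T S \<Longrightarrow> S \<equiv>\<^sub>T R \<Longrightarrow> T \<equiv>\<^sub>T R"
| cong_arr: "U \<equiv>\<^sub>T U' \<Longrightarrow> unit_ty U \<Longrightarrow> unit_ty U' \<Longrightarrow> T \<equiv>\<^sub>T T' \<Longrightarrow> Arr U T \<equiv>\<^sub>T Arr U' T'"
| cong_all: "T \<equiv>\<^sub>T T' \<Longrightarrow> All T \<equiv>\<^sub>T All T'"
| cong_scal: "T \<equiv>\<^sub>T T' \<Longrightarrow> Scal a T \<equiv>\<^sub>T Scal a T'"

datatype ('s, 'v) tm =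
    Var 'v
  | Lam 'v "('s, 'v) tm"
  | App "('s, 'v) tm" "('s, 'v) tm"   (* (t) r *)
  | Zt
  | Sm 's "('s, 'v) tm"
  | Plus "('s, 'v) tm" "('s, 'v) tm"

text \<open>Terms are taken modulo associativity and commutativity of +.\<close>
inductive ac_eq :: "('s, 'v) tm \<Rightarrow> ('s, 'v) tm \<Rightarrow> bool" where
  ac_refl: "ac_eq t t"
| ac_sym: "ac_eq t r \<Longrightarrow> ac_eq r t"
| ac_trans: "ac_eq t r \<Longrightarrow> ac_eq r s \<Longrightarrow> ac_eq t s"
| ac_comm: "ac_eq (Plus t r) (Plus r t)"
| ac_assoc: "ac_eq (Plus (Plus t r) s) (Plus t (Plus r s))"
| ac_lam: "ac_eq t t' \<Longrightarrow> ac_eq (Lam x t) (Lam x t')"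
| ac_app: "ac_eq t t' \<Longrightarrow> ac_eq r r' \<Longrightarrow> ac_eq (App t r) (App t' r')"
| ac_sm: "ac_eq t t' \<Longrightarrow> ac_eq (Sm a t) (Sm a t')"
| ac_plus: "ac_eq t t' \<Longrightarrow> ac_eq r r' \<Longrightarrow> ac_eq (Plus t r) (Plus t' r')"

type_synonym ('s, 'v) ctx = "'v \<Rightarrow> 's ty option"

definition ctx_ok :: "('s, 'v) ctx \<Rightarrow> bool" where
  "ctx_ok \<Gamma> \<longleftrightarrow> finite (dom \<Gamma>) \<and> (\<forall>x U. \<Gamma> x = Some U \<longrightarrow> unit_ty U)"

definition lift_ctx :: "('s, 'v) ctx \<Rightarrow> ('s, 'v) ctx" where
  "lift_ctx \<Gamma> = (\<lambda>x. map_option (lift 0) (\<Gamma> x))"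

inductive typing :: "('s::comm_ring_1, 'v) ctx \<Rightarrow> ('s, 'v) tm \<Rightarrow> 's ty \<Rightarrow> bool"
  ("_ \<turnstile> _ : _" [50, 50, 50] 50) where
  t_ax: "\<Gamma> x = Some U \<Longrightarrow> \<Gamma> \<turnstile> Var x : U"
| t_equiv: "\<Gamma> \<turnstile> t : T \<Longrightarrow> T \<equiv>\<^sub>T S \<Longrightarrow> \<Gamma> \<turnstile> t : S"
| t_arrE: "\<Gamma> \<turnstile> t : Scal a (Arr U T) \<Longrightarrow> \<Gamma> \<turnstile> r : Scal b U \<Longrightarrow> \<Gamma> \<turnstile> App t r : Scal (a * b) T"
| t_arrI: "unit_ty U \<Longrightarrow> \<Gamma>(x \<mapsto> U) \<turnstile> t : T \<Longrightarrow> \<Gamma> \<turnstile> Lam x t : Arr U T"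
| t_allE: "\<Gamma> \<turnstile> t : All T \<Longrightarrow> unit_ty U \<Longrightarrow> \<Gamma> \<turnstile> t : subst 0 U T"
| t_allI: "lift_ctx \<Gamma> \<turnstile> t : T \<Longrightarrow> \<Gamma> \<turnstile> t : All T"
| t_zero: "\<Gamma> \<turnstile> Zt : TZero"
| t_plusI: "\<Gamma> \<turnstile> t : Scal a T \<Longrightarrow> \<Gamma> \<turnstile> r : Scal b T \<Longrightarrow> \<Gamma> \<turnstile> Plus t r : Scal (a + b) T"
| t_sI: "\<Gamma> \<turnstile> t : T \<Longrightarrow> \<Gamma> \<turnstile> Sm a t : Scal a T"
| t_ac: "\<Gamma> \<turnstile> t : T \<Longrightarrow> ac_eq t t' \<Longrightarrow> \<Gamma> \<turnstile> t' : T"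

end

theory Submission
  imports Defs
begin

text \<open>Assign to each type the product of the scalars in front of its unit part, with
  \<open>\<overline>0\<close> weighted \<open>0\<close>. This weight is invariant under \<open>\<equiv>\<close> and under the \<open>\<forall>\<close>-rules (unit
  types weigh \<open>1\<close>), and \<open>(\<rightarrow>\<^sub>E)\<close> multiplies the weights of its premises. So every type of
  \<open>\<zero>\<close>, \<open>(\<zero>) t\<close> or \<open>(t) \<zero>\<close> weighs \<open>0\<close>, and a well-formed type of weight \<open>0\<close> is equivalent
  to \<open>0.B \<equiv> \<overline>0\<close> for some \<open>B\<close>.\<close>

fun coef :: "'s::comm_ring_1 ty \<Rightarrow> 's" where
  "coef (TVar n) = 1"
| "coef (Arr U T) = 1"
| "coef (All T) = coef T"
| "coef (Scal a T) = a * coef T"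
| "coef TZero = 0"

lemma unit_ty_imp_ty_ok: "unit_ty T \<Longrightarrow> ty_ok T"
  by (induction T) auto

lemma lift_preserves_ok:
  "(unit_ty T \<longrightarrow> unit_ty (lift c T)) \<and> (ty_ok T \<longrightarrow> ty_ok (lift c T))"
  by (induction T arbitrary: c) auto

lemma subst_preserves_ok:
  "unit_ty U \<Longrightarrow> (unit_ty T \<longrightarrow> unit_ty (subst k U T)) \<and> (ty_ok T \<longrightarrow> ty_ok (subst k U T))"
  by (induction T arbitrary: k U) (auto simp: lift_preserves_ok unit_ty_imp_ty_ok)

lemma ctx_ok_lift_ctx: "ctx_ok \<Gamma> \<Longrightarrow> ctx_ok (lift_ctx \<Gamma>)"
proof -
  assume "ctx_ok \<Gamma>"
  moreover have "dom (lift_ctx \<Gamma>) = dom \<Gamma>"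
    by (auto simp: lift_ctx_def)
  ultimately show ?thesis
    by (auto simp: ctx_ok_def lift_ctx_def lift_preserves_ok)
qed

lemma ty_equiv_imp_ty_ok: "T \<equiv>\<^sub>T S \<Longrightarrow> ty_ok T \<and> ty_ok S"
  by (induction rule: ty_equiv.induct) (auto simp: unit_ty_imp_ty_ok)

lemma typing_imp_ty_ok: "\<Gamma> \<turnstile> s : T \<Longrightarrow> ctx_ok \<Gamma> \<Longrightarrow> ty_ok T"
proof (induction rule: typing.induct)
  case (t_ax \<Gamma> x U)
  then show ?case by (auto simp: ctx_ok_def unit_ty_imp_ty_ok)
next
  case (t_equiv \<Gamma> t T S)
  then show ?case using ty_equiv_imp_ty_ok by blast
next
  case (t_arrI U \<Gamma> x t T)
  then have "ctx_ok (\<Gamma>(x \<mapsto> U))" by (auto simp: ctx_ok_def)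
  then have "ty_ok T" by (rule t_arrI.IH)
  with t_arrI.hyps(1) show ?case by simp
next
  case (t_allE \<Gamma> t T U)
  then show ?case using subst_preserves_ok by auto
next
  case (t_allI \<Gamma> t T)
  then show ?case using ctx_ok_lift_ctx by auto
qed auto

lemma coef_unit_ty: "unit_ty U \<Longrightarrow> coef U = 1"
  by (induction U) auto

lemma coef_lift: "coef (lift c T) = coef T"
  by (induction T arbitrary: c) auto

lemma coef_subst: "unit_ty U \<Longrightarrow> coef (subst k U T) = coef T"
  by (induction T arbitrary: k U) (auto simp: coef_unit_ty lift_preserves_ok)

lemma ty_equiv_coef: "T \<equiv>\<^sub>T S \<Longrightarrow> coef T = coef S"
  by (induction rule: ty_equiv.induct) (auto simp: coef_unit_ty mult.assoc)

lemma ty_equiv_Scal_coef: "ty_ok T \<Longrightarrow> \<exists>B. T \<equiv>\<^sub>T Scal (coef T) B"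
proof (induction T)
  case (TVar n)
  show ?case using eq_sym[OF ax_one[OF TVar.prems]] by auto
next
  case (Arr U T)
  show ?case using eq_sym[OF ax_one[OF Arr.prems]] by auto
next
  case (All T)
  then obtain B where B: "T \<equiv>\<^sub>T Scal (coef T) B" by auto
  have "ty_ok B" using ty_equiv_imp_ty_ok[OF B] by simp
  then have "All T \<equiv>\<^sub>T Scal (coef T) (All B)"
    using eq_trans[OF cong_all[OF B] ax_all] by blast
  then show ?case by auto
next
  case (Scal a T)
  then obtain B where B: "T \<equiv>\<^sub>T Scal (coef T) B" by auto
  have "ty_ok B" using ty_equiv_imp_ty_ok[OF B] by simp
  then have "Scal a T \<equiv>\<^sub>T Scal (a * coef T) B"
    using eq_trans[OF cong_scal[OF B] ax_mult] by blast
  then show ?case by auto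
next
  case TZero
  show ?case using eq_sym[OF ax_scal_zero] by auto
qed

lemma coef_eq_0_imp_equiv_TZero:
  assumes "ty_ok T" and "coef T = 0"
  shows "T \<equiv>\<^sub>T TZero"
proof -
  obtain B where B: "T \<equiv>\<^sub>T Scal 0 B"
    using ty_equiv_Scal_coef assms by metis
  have "ty_ok B" using ty_equiv_imp_ty_ok[OF B] by simp
  then show ?thesis using eq_trans[OF B ax_zero_scal] by blast
qed

definition zero_or_zero_app :: "('s, 'v) tm \<Rightarrow> bool" where
  "zero_or_zero_app s \<longleftrightarrow> s = Zt \<or> (\<exists>t r. s = App t r \<and> (t = Zt \<or> r = Zt))"

lemma ac_eq_Zt_iff: "ac_eq s t \<Longrightarrow> s = Zt \<longleftrightarrow> t = Zt"
  by (induction rule: ac_eq.induct) auto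

lemma ac_eq_zero_or_zero_app: "ac_eq s t \<Longrightarrow> zero_or_zero_app s \<longleftrightarrow> zero_or_zero_app t"
proof (induction rule: ac_eq.induct)
  case (ac_app t t' r r')
  then show ?case
    using ac_eq_Zt_iff[of t t'] ac_eq_Zt_iff[of r r'] by (auto simp: zero_or_zero_app_def)
qed (auto simp: zero_or_zero_app_def)

text \<open>The statement is generalised from \<open>(\<zero>) t\<close>, \<open>(t) \<zero>\<close> to include \<open>\<zero>\<close> itself, which is
  what the premises of \<open>(\<rightarrow>\<^sub>E)\<close> give back to the induction.\<close>

lemma typing_zero_or_zero_app_coef:
  "\<Gamma> \<turnstile> s : T \<Longrightarrow> ctx_ok \<Gamma> \<Longrightarrow> zero_or_zero_app s \<Longrightarrow> coef T = 0"
proof (induction rule: typing.induct)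
  case (t_equiv \<Gamma> t T S)
  then show ?case using ty_equiv_coef by metis
next
  case (t_arrE \<Gamma> t a U T r b)
  have "unit_ty U"
    using typing_imp_ty_ok[OF t_arrE.hyps(1) t_arrE.prems(1)] by simp
  then have "coef (Scal b U) = b" by (simp add: coef_unit_ty)
  moreover have "zero_or_zero_app t \<or> zero_or_zero_app r"
    using t_arrE.prems by (auto simp: zero_or_zero_app_def)
  ultimately have "a = 0 \<or> b = 0"
    using t_arrE.IH t_arrE.prems(1) by auto
  then show ?case by auto
next
  case (t_allE \<Gamma> t T U)
  then show ?case by (simp add: coef_subst)
next
  case (t_allI \<Gamma> t T)
  then show ?case using ctx_ok_lift_ctx coef_lift by auto
next
  case (t_ac \<Gamma> t T t')
  then show ?case using ac_eq_zero_or_zero_app by blast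
qed (auto simp: zero_or_zero_app_def)

theorem mainTheorem9:
  fixes \<Gamma> :: "('s::comm_ring_1, 'v) ctx" and t :: "('s, 'v) tm" and T :: "'s ty"
  assumes "ctx_ok \<Gamma>" and "ty_ok T"
  shows "(\<Gamma> \<turnstile> App Zt t : T \<longrightarrow> T \<equiv>\<^sub>T TZero) \<and> (\<Gamma> \<turnstile> App t Zt : T \<longrightarrow> T \<equiv>\<^sub>T TZero)"
  using typing_zero_or_zero_app_coef[OF _ assms(1)] coef_eq_0_imp_equiv_TZero[OF assms(2)]
  by (auto simp: zero_or_zero_app_def)

end
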